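(* Let $N$ be a temporal phylogenetic network. Then $N$ is tree-based if and only if $N$ satisfies the antichain-to-leaf property.
   Context: $X$ is a nonempty finite set. A phylogenetic network on $X$ is a rooted acyclic digraph with no parallel arcs such that: the unique root has out-degree at least one; $X$ is exactly the set of vertices of out-degree zero (leaves), each of in-degree one; every other vertex either has in-degree one and out-degree at least two (a tree vertex) or in-degree at least two and out-degree one (a reticulation). If $|X|=1$, the network may also consist of the single vertex in $X$. An arc ending in a reticulation is a reticulation arc; all other arcs are tree arcs. A phylogenetic network $N$ on $X$ is tree-based if it can be obtained from some phylogenetic $X$-tree (phylogenetic network with no reticulations) $T$ by first taking a subdivision of $T$ (new vertices are attachment points) and then adding new arcs $(u,v)$ where either $u$ and $v$ are both attachment points, or $u$ is a non-leaf vertex of $T$ and $v$ is an attachment point; equivalently, $N$ has a rooted spanning tree with the same root as $N$ all of whose leaves lie in $X$. $N=(V,A)$ is temporal if there is a map $\lambda:V\to\mathbb{R}$ with $\lambda(u)<\lambda(v)$ for every tree arc $(u,v)$ and $\lambda(u)=\lambda(v)$ for every reticulation arc $(u,v)$. An antichain is a set of vertices no two of which are joined by a directed path. $N$ satisfies the antichain-to-leaf property if for every antichain of $k$ vertices there exist $k$ vertex-disjoint directed paths from the elements of the antichain to leaves of $N$. *)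

theory Defs
  imports Main "HOL.Real"
begin

text \<open>A directed graph is given by a vertex set V and an arc set A of ordered pairs
  (so there are no parallel arcs).\<close>

definition indeg :: "('a \<times> 'a) set \<Rightarrow> 'a \<Rightarrow> nat" where
  "indeg A v = card {u. (u, v) \<in> A}"

definition outdeg :: "('a \<times> 'a) set \<Rightarrow> 'a \<Rightarrow> nat" where
  "outdeg A v = card {w. (v, w) \<in> A}"

definition phylo_network :: "'a set \<Rightarrow> ('a \<times> 'a) set \<Rightarrow> 'a set \<Rightarrow> 'a \<Rightarrow> bool" where
  "phylo_network V A X r \<longleftrightarrow>
     finite V \<and> A \<subseteq> V \<times> V \<and> X \<noteq> {} \<and> X \<subseteq> V \<and> r \<in> V \<and>
     acyclic A \<and>
     indeg A r = 0 \<and> (\<forall>v\<in>V. v \<noteq> r \<longrightarrow> indeg A v \<ge> 1) \<and>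
     ((V = {r} \<and> X = {r} \<and> A = {}) \<or>
      (outdeg A r \<ge> 1 \<and>
       X = {v\<in>V. outdeg A v = 0} \<and>
       (\<forall>x\<in>X. indeg A x = 1) \<and>
       (\<forall>v\<in>V. v \<noteq> r \<and> v \<notin> X \<longrightarrow>
          (indeg A v = 1 \<and> outdeg A v \<ge> 2) \<or> (indeg A v \<ge> 2 \<and> outdeg A v = 1))))"

definition reticulation :: "('a \<times> 'a) set \<Rightarrow> 'a \<Rightarrow> bool" where
  "reticulation A v \<longleftrightarrow> indeg A v \<ge> 2"

definition tree_based :: "'a set \<Rightarrow> ('a \<times> 'a) set \<Rightarrow> 'a set \<Rightarrow> 'a \<Rightarrow> bool" where
  "tree_based V A X r \<longleftrightarrow>
     (\<exists>S. S \<subseteq> A \<and>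
          (\<forall>v\<in>V. (r, v) \<in> S\<^sup>*) \<and>
          (\<forall>v\<in>V. v \<noteq> r \<longrightarrow> indeg S v = 1) \<and>
          indeg S r = 0 \<and>
          (\<forall>v\<in>V. outdeg S v = 0 \<longrightarrow> v \<in> X))"

definition temporal :: "'a set \<Rightarrow> ('a \<times> 'a) set \<Rightarrow> bool" where
  "temporal V A \<longleftrightarrow>
     (\<exists>t :: 'a \<Rightarrow> real. \<forall>(u, v)\<in>A.
        (reticulation A v \<longrightarrow> t u = t v) \<and> (\<not> reticulation A v \<longrightarrow> t u < t v))"

definition antichain :: "'a set \<Rightarrow> ('a \<times> 'a) set \<Rightarrow> 'a set \<Rightarrow> bool" where
  "antichain V A S \<longleftrightarrow> S \<subseteq> V \<and> (\<forall>u\<in>S. \<forall>v\<in>S. u \<noteq> v \<longrightarrow> (u, v) \<notin> A\<^sup>+)"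

definition dpath :: "('a \<times> 'a) set \<Rightarrow> 'a list \<Rightarrow> bool" where
  "dpath A p \<longleftrightarrow> p \<noteq> [] \<and> successively (\<lambda>u v. (u, v) \<in> A) p"

definition antichain_to_leaf :: "'a set \<Rightarrow> ('a \<times> 'a) set \<Rightarrow> 'a set \<Rightarrow> bool" where
  "antichain_to_leaf V A X \<longleftrightarrow>
     (\<forall>S. antichain V A S \<longrightarrow>
        (\<exists>P :: 'a \<Rightarrow> 'a list.
           (\<forall>s\<in>S. dpath A (P s) \<and> hd (P s) = s \<and> last (P s) \<in> X) \<and>
           (\<forall>s\<in>S. \<forall>t\<in>S. s \<noteq> t \<longrightarrow> set (P s) \<inter> set (P t) = {})))"

end

theory Submission
  imports Defs
begin

text \<open>
  If N is tree-based, follow its spanning tree downwards from every vertex of an antichain to a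
  leaf; since every vertex has a unique tree parent, tree paths from incomparable vertices are
  disjoint.

  Conversely, N is tree-based as soon as the omnians (non-leaf vertices all of whose children
  are reticulations) can be matched injectively to children (Jetten and van Iersel): every other
  non-leaf vertex has a tree-vertex child, of which it is the only parent. A reticulate omnian has
  a single child, and two of them never share it, as they would form an antichain that cannot be
  linked disjointly to leaves. The other omnians are matched by Hall's theorem to children without
  reticulation parents. The Hall condition is checked one time level at a time: the temporal
  labelling makes the omnians of one level, together with those reticulation parents of their
  children that are not below them, an antichain, and tracing its disjoint leaf paths back along
  reticulation-to-reticulation arcs yields distinct admissible children.
\<close>

lemma successively_next_in_set:
  assumes "successively R p" "b \<in> set p" "b \<noteq> last p" "\<And>z. R b z \<Longrightarrow> z = b'"
  shows "b' \<in> set p"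
  using assms
proof (induction p rule: induct_list012)
  case (3 x y zs)
  show ?case
  proof (cases "b = x")
    case True
    then show ?thesis using "3.prems"(1,4) by force
  next
    case False
    then show ?thesis using "3.IH"(2) "3.prems" by simp
  qed
qed auto

lemma indeg_1_unique: "indeg A v = 1 \<Longrightarrow> (a, v) \<in> A \<Longrightarrow> (b, v) \<in> A \<Longrightarrow> a = b"
  unfolding indeg_def by (metis card_1_singletonE mem_Collect_eq singletonD)

lemma outdeg_1_unique: "outdeg A v = 1 \<Longrightarrow> (v, a) \<in> A \<Longrightarrow> (v, b) \<in> A \<Longrightarrow> a = b"
  unfolding outdeg_def by (metis card_1_singletonE mem_Collect_eq singletonD)

lemma sdr_combine:
  assumes f: "inj_on f J" "\<forall>i\<in>J. f i \<in> S i" "f ` J \<subseteq> U"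
    and g: "inj_on g (I - J)" "\<forall>i\<in>I - J. g i \<in> S i - U"
  shows "inj_on (\<lambda>i. if i \<in> J then f i else g i) I \<and> (\<forall>i\<in>I. (if i \<in> J then f i else g i) \<in> S i)"
proof (intro conjI ballI inj_onI)
  fix a b assume ab: "a \<in> I" "b \<in> I" "(if a \<in> J then f a else g a) = (if b \<in> J then f b else g b)"
  consider "a \<in> J" "b \<in> J" | "a \<notin> J" "b \<notin> J" | "a \<in> J \<longleftrightarrow> b \<notin> J" by blast
  then show "a = b"
  proof cases
    case 1
    then show ?thesis using ab f(1) by (simp add: inj_on_eq_iff)
  next
    case 2
    then show ?thesis using ab g(1) by (simp add: inj_on_eq_iff)
  next
    case 3
    then show ?thesis using ab f(3) g(2) by (auto split: if_splits)
  qed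
next
  fix i assume "i \<in> I"
  then show "(if i \<in> J then f i else g i) \<in> S i" using f(2) g(2) by simp
qed

lemma hall_condition_delete_element:
  assumes "finite I" "\<forall>i\<in>I. finite (S i)" "i0 \<in> I"
    and surplus: "\<forall>J\<subseteq>I. J \<noteq> {} \<and> J \<noteq> I \<longrightarrow> card J < card (\<Union>(S ` J))"
  shows "\<forall>J\<subseteq>I - {i0}. card J \<le> card (\<Union>((\<lambda>i. S i - {x}) ` J))"
proof (intro allI impI)
  fix J assume J: "J \<subseteq> I - {i0}"
  show "card J \<le> card (\<Union>((\<lambda>i. S i - {x}) ` J))"
  proof (cases "J = {}")
    case False
    with J surplus assms(3) have "card J < card (\<Union>(S ` J))" by blast
    moreover have "finite (\<Union>(S ` J))"
      using J assms(1,2) by (meson Diff_subset finite_UN_I finite_subset subsetD)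
    moreover have "\<Union>((\<lambda>i. S i - {x}) ` J) = \<Union>(S ` J) - {x}" by auto
    ultimately show ?thesis by (simp add: card_Diff_singleton_if) linarith
  qed simp
qed

lemma hall_condition_delete_tight_set:
  assumes "finite I" "\<forall>i\<in>I. finite (S i)" "J \<subseteq> I" "card (\<Union>(S ` J)) \<le> card J"
    and hall: "\<forall>K\<subseteq>I. card K \<le> card (\<Union>(S ` K))"
  shows "\<forall>L\<subseteq>I - J. card L \<le> card (\<Union>((\<lambda>i. S i - \<Union>(S ` J)) ` L))"
proof (intro allI impI)
  fix L assume L: "L \<subseteq> I - J"
  let ?U = "\<Union>(S ` J)" and ?R = "\<Union>((\<lambda>i. S i - \<Union>(S ` J)) ` L)"
  have fin: "finite L" "finite J"
    using L assms(1,3) by (auto intro: finite_subset)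
  then have fin': "finite ?U" "finite ?R"
    using L assms(2,3) by auto
  have "card L + card J = card (L \<union> J)"
    using L fin by (subst card_Un_disjoint) auto
  also have "\<dots> \<le> card (\<Union>(S ` (L \<union> J)))"
    using hall L assms(3) by (meson Diff_subset Un_least order_trans)
  also have "\<Union>(S ` (L \<union> J)) = ?R \<union> ?U" by auto
  also have "card (?R \<union> ?U) = card ?R + card ?U"
    using fin' by (intro card_Un_disjoint) auto
  finally show "card L \<le> card ?R" using assms(4) by linarith
qed

theorem hall_marriage:
  assumes "finite I" "\<forall>i\<in>I. finite (S i)" "\<forall>J\<subseteq>I. card J \<le> card (\<Union>(S ` J))"
  shows "\<exists>f. inj_on f I \<and> (\<forall>i\<in>I. f i \<in> S i)"
  using assms
proof (induction "card I" arbitrary: I S rule: less_induct)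
  case less
  consider (empty) "I = {}"
    | (surplus) "I \<noteq> {}" "\<forall>J\<subseteq>I. J \<noteq> {} \<and> J \<noteq> I \<longrightarrow> card J < card (\<Union>(S ` J))"
    | (tight) J where "J \<subseteq> I" "J \<noteq> {}" "J \<noteq> I" "card (\<Union>(S ` J)) \<le> card J"
    using not_less by blast
  then show ?case
  proof cases
    case empty
    then show ?thesis by auto
  next
    case surplus
    then obtain i0 where i0: "i0 \<in> I" by blast
    have "1 \<le> card (S i0)" using less.prems(3)[rule_format, of "{i0}"] i0 by simp
    then obtain x where x: "x \<in> S i0" by (metis card.empty ex_in_conv not_one_le_zero)
    have "card (I - {i0}) < card I" using less.prems(1) i0 by (rule card_Diff1_less)
    then obtain g where g: "inj_on g (I - {i0})" "\<forall>i\<in>I - {i0}. g i \<in> S i - {x}"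
      using less.hyps[of "I - {i0}" "\<lambda>i. S i - {x}"] less.prems(1,2)
        hall_condition_delete_element[OF less.prems(1,2) i0 surplus(2)] by auto
    show ?thesis
      using sdr_combine[of "\<lambda>_. x" "{i0}" S "{x}" g I] g x by auto
  next
    case tight
    have finJ: "finite J" using tight(1) less.prems(1) by (rule finite_subset)
    have "card J < card I" using tight less.prems(1) by (meson psubsetI psubset_card_mono)
    moreover have "\<forall>i\<in>J. finite (S i)" "\<forall>K\<subseteq>J. card K \<le> card (\<Union>(S ` K))"
      using less.prems(2,3) tight(1) by auto
    ultimately obtain f where f: "inj_on f J" "\<forall>i\<in>J. f i \<in> S i"
      using less.hyps finJ by blast
    have "I - J \<subset> I" using tight(1,2) by blast
    then have "card (I - J) < card I" by (rule psubset_card_mono[OF less.prems(1)])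
    then obtain g where g: "inj_on g (I - J)" "\<forall>i\<in>I - J. g i \<in> S i - \<Union>(S ` J)"
      using less.hyps[of "I - J" "\<lambda>i. S i - \<Union>(S ` J)"] less.prems
        hall_condition_delete_tight_set[OF less.prems(1,2) tight(1,4) less.prems(3)] by auto
    have "f ` J \<subseteq> \<Union>(S ` J)" using f(2) by blast
    then show ?thesis
      using sdr_combine[OF f _ g] f(2) by blast
  qed
qed

definition leaf_linkage :: "('a \<times> 'a) set \<Rightarrow> 'a set \<Rightarrow> 'a set \<Rightarrow> ('a \<Rightarrow> 'a list) \<Rightarrow> bool" where
  "leaf_linkage A X S P \<longleftrightarrow>
     (\<forall>s\<in>S. dpath A (P s) \<and> hd (P s) = s \<and> last (P s) \<in> X) \<and>
     (\<forall>s\<in>S. \<forall>t\<in>S. s \<noteq> t \<longrightarrow> set (P s) \<inter> set (P t) = {})"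

lemma antichain_to_leaf_iff:
  "antichain_to_leaf V A X \<longleftrightarrow> (\<forall>S. antichain V A S \<longrightarrow> (\<exists>P. leaf_linkage A X S P))"
  unfolding antichain_to_leaf_def leaf_linkage_def ..

lemma leaf_linkage_disjoint:
  "leaf_linkage A X S P \<Longrightarrow> s \<in> S \<Longrightarrow> s' \<in> S \<Longrightarrow> x \<in> set (P s) \<Longrightarrow> x \<in> set (P s') \<Longrightarrow> s = s'"
  unfolding leaf_linkage_def by blast

lemma path_to_sink:
  assumes "finite S" "acyclic S"
  shows "\<exists>p. dpath S p \<and> hd p = s \<and> outdeg S (last p) = 0 \<and> (\<forall>x\<in>set p. (s, x) \<in> S\<^sup>*)"
  using finite_acyclic_wf_converse[OF assms]
proof (induction s rule: wf_induct_rule)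
  case (less s)
  show ?case
  proof (cases "outdeg S s = 0")
    case True
    then show ?thesis by (intro exI[of _ "[s]"]) (auto simp: dpath_def)
  next
    case False
    then obtain c where c: "(s, c) \<in> S" unfolding outdeg_def by fastforce
    with less obtain p where p: "dpath S p" "hd p = c" "outdeg S (last p) = 0" "\<forall>x\<in>set p. (c, x) \<in> S\<^sup>*"
      by blast
    have "dpath S (s # p)" using p(1,2) c by (cases p) (auto simp: dpath_def)
    moreover have "\<forall>x\<in>set (s # p). (s, x) \<in> S\<^sup>*"
      using p(4) c by (auto intro: converse_rtrancl_into_rtrancl)
    ultimately show ?thesis using p(1,3) by (intro exI[of _ "s # p"]) (auto simp: dpath_def)
  qed
qed

lemma tree_based_spanning_tree:
  assumes "finite V" "A \<subseteq> V \<times> V" "tree_based V A X r"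
  obtains S where "S \<subseteq> A" "single_valued (S\<inverse>)" "\<forall>v\<in>V. outdeg S v = 0 \<longrightarrow> v \<in> X"
proof -
  obtain S where S: "S \<subseteq> A" "\<forall>v\<in>V. v \<noteq> r \<longrightarrow> indeg S v = 1" "indeg S r = 0"
    "\<forall>v\<in>V. outdeg S v = 0 \<longrightarrow> v \<in> X"
    using assms(3) unfolding tree_based_def by blast
  have SV: "S \<subseteq> V \<times> V" using S(1) assms(2) by auto
  then have "finite S" using assms(1) finite_subset by blast
  have "a = b" if "(a, v) \<in> S" "(b, v) \<in> S" for a b v
  proof -
    have "finite {u. (u, v) \<in> S}"
      by (rule finite_subset[OF _ finite_Domain[OF \<open>finite S\<close>]]) auto
    then have "v \<noteq> r" using that(1) S(3) unfolding indeg_def by auto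
    moreover have "v \<in> V" using that(1) SV by auto
    ultimately have "indeg S v = 1" using S(2) by blast
    then show "a = b" using indeg_1_unique that by metis
  qed
  then have "single_valued (S\<inverse>)" by (auto intro: single_valuedI)
  with S(1) show ?thesis using S(4) by (rule that)
qed

lemma tree_based_imp_antichain_to_leaf:
  assumes "finite V" "A \<subseteq> V \<times> V" "acyclic A" and "tree_based V A X r"
  shows "antichain_to_leaf V A X"
  unfolding antichain_to_leaf_iff
proof (intro allI impI)
  fix T assume anti: "antichain V A T"
  obtain S where S: "S \<subseteq> A" "single_valued (S\<inverse>)" "\<forall>v\<in>V. outdeg S v = 0 \<longrightarrow> v \<in> X"
    using tree_based_spanning_tree[OF assms(1,2,4)] by blast
  have SV: "S \<subseteq> V \<times> V" using S(1) assms(2) by auto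
  have "finite S" using assms(1) finite_subset[OF SV] by blast
  moreover have "acyclic S" using assms(3) S(1) acyclic_subset by blast
  ultimately obtain P where P: "\<And>s. dpath S (P s) \<and> hd (P s) = s \<and> outdeg S (last (P s)) = 0
      \<and> (\<forall>x\<in>set (P s). (s, x) \<in> S\<^sup>*)"
    using path_to_sink by metis
  have "\<forall>s\<in>T. dpath A (P s) \<and> hd (P s) = s \<and> last (P s) \<in> X"
  proof
    fix s assume "s \<in> T"
    then have "s \<in> V" using anti unfolding antichain_def by auto
    have "(s, last (P s)) \<in> S\<^sup>*" using P[of s] unfolding dpath_def by simp
    then have "last (P s) \<in> V" using \<open>s \<in> V\<close> SV by (cases rule: rtranclE) auto
    moreover have "dpath A (P s)" using P[of s] S(1) unfolding dpath_def by (auto elim: successively_mono)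
    ultimately show "dpath A (P s) \<and> hd (P s) = s \<and> last (P s) \<in> X" using P[of s] S(3) by auto
  qed
  moreover have "set (P s) \<inter> set (P s') = {}" if st: "s \<in> T" "s' \<in> T" "s \<noteq> s'" for s s'
  proof (rule ccontr)
    assume "set (P s) \<inter> set (P s') \<noteq> {}"
    then obtain x where "(x, s) \<in> (S\<inverse>)\<^sup>*" "(x, s') \<in> (S\<inverse>)\<^sup>*"
      using P by (auto simp: rtrancl_converse)
    then have "(s, s') \<in> S\<^sup>* \<or> (s', s) \<in> S\<^sup>*"
      using single_valued_confluent S(2) by (fastforce simp: rtrancl_converse)
    then have "(s, s') \<in> S\<^sup>+ \<or> (s', s) \<in> S\<^sup>+"
      using st(3) by (auto simp: rtrancl_eq_or_trancl)
    moreover have "S\<^sup>+ \<subseteq> A\<^sup>+" using S(1) by (rule trancl_mono_subset)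
    ultimately have "(s, s') \<in> A\<^sup>+ \<or> (s', s) \<in> A\<^sup>+" by blast
    moreover have "(s, s') \<notin> A\<^sup>+" "(s', s) \<notin> A\<^sup>+" using anti st unfolding antichain_def by auto
    ultimately show False by blast
  qed
  ultimately show "\<exists>P. leaf_linkage A X T P" unfolding leaf_linkage_def by blast
qed

lemma dpath_second_vertex:
  assumes "dpath A p" "hd p = s" "last p \<in> X" "s \<notin> X"
  obtains c q where "p = s # c # q" "(s, c) \<in> A"
proof -
  obtain q' where p: "p = s # q'" using assms(1,2) unfolding dpath_def by (cases p) auto
  then obtain c q where "q' = c # q" using assms(3,4) by (cases q') auto
  then show ?thesis using that p assms(1) unfolding dpath_def by auto
qed

locale proper_phylo_network =
  fixes V :: "'a set" and A :: "('a \<times> 'a) set" and X :: "'a set" and r :: 'a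
  assumes network: "phylo_network V A X r" and arcs_nonempty: "A \<noteq> {}"
begin

abbreviation ret :: "'a \<Rightarrow> bool" where
  "ret \<equiv> reticulation A"

lemma finite_V: "finite V" and arcs_in_V: "A \<subseteq> V \<times> V" and acyclic_A: "acyclic A"
  and indeg_root: "indeg A r = 0" and indeg_nonroot: "\<forall>v\<in>V. v \<noteq> r \<longrightarrow> indeg A v \<ge> 1"
  and leaves_eq: "X = {v\<in>V. outdeg A v = 0}" and indeg_leaf: "\<forall>x\<in>X. indeg A x = 1"
  and inner_degrees: "\<forall>v\<in>V. v \<noteq> r \<and> v \<notin> X \<longrightarrow>
    (indeg A v = 1 \<and> outdeg A v \<ge> 2) \<or> (indeg A v \<ge> 2 \<and> outdeg A v = 1)"
  using network arcs_nonempty unfolding phylo_network_def by auto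

lemma wf_A: "wf A"
  using finite_subset[OF arcs_in_V] finite_V acyclic_A by (blast intro: finite_acyclic_wf)

lemma arc_in_V: "(u, v) \<in> A \<Longrightarrow> u \<in> V \<and> v \<in> V"
  using arcs_in_V by auto

lemma finite_parents: "finite {u. (u, v) \<in> A}"
  by (rule finite_subset[OF _ finite_V]) (use arc_in_V in auto)

lemma finite_children: "finite {w. (v, w) \<in> A}"
  by (rule finite_subset[OF _ finite_V]) (use arc_in_V in auto)

lemma no_arc_into_root: "(u, r) \<notin> A"
  using indeg_root finite_parents[of r] unfolding indeg_def by auto

lemma has_parent: "v \<in> V \<Longrightarrow> v \<noteq> r \<Longrightarrow> \<exists>u. (u, v) \<in> A"
  using indeg_nonroot unfolding indeg_def by (metis Collect_empty_eq card.empty not_one_le_zero)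

lemma nonleaf_has_child: "v \<in> V \<Longrightarrow> v \<notin> X \<Longrightarrow> \<exists>c. (v, c) \<in> A"
  using leaves_eq unfolding outdeg_def by force

lemma ret_has_parent: "ret v \<Longrightarrow> \<exists>u. (u, v) \<in> A"
  unfolding reticulation_def indeg_def by (metis Collect_empty_eq card.empty not_numeral_le_zero)

lemma ret_in_V: "ret v \<Longrightarrow> v \<in> V"
  using ret_has_parent arc_in_V by blast

lemma ret_not_leaf: "ret v \<Longrightarrow> v \<notin> X"
  using indeg_leaf unfolding reticulation_def by force

lemma ret_outdeg:
  assumes "ret v" shows "outdeg A v = 1"
proof -
  have "v \<noteq> r" using ret_has_parent[OF assms] no_arc_into_root by blast
  then have "(indeg A v = 1 \<and> outdeg A v \<ge> 2) \<or> (indeg A v \<ge> 2 \<and> outdeg A v = 1)"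
    using inner_degrees ret_in_V[OF assms] ret_not_leaf[OF assms] by blast
  then show ?thesis using assms unfolding reticulation_def by auto
qed

lemma ret_child_unique: "ret v \<Longrightarrow> (v, a) \<in> A \<Longrightarrow> (v, b) \<in> A \<Longrightarrow> a = b"
  by (rule outdeg_1_unique[OF ret_outdeg])

lemma nonret_parent_unique:
  assumes "v \<in> V" "v \<noteq> r" "\<not> ret v" "(a, v) \<in> A" "(b, v) \<in> A"
  shows "a = b"
proof -
  have "indeg A v = 1" using indeg_nonroot assms(1-3) unfolding reticulation_def by force
  then show ?thesis using indeg_1_unique assms(4,5) by metis
qed

lemma tree_based_if_parent_choice:
  assumes parent: "\<forall>v\<in>V - {r}. (p v, v) \<in> A"
    and onto: "\<forall>u\<in>V - X. \<exists>v\<in>V - {r}. p v = u"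
  shows "tree_based V A X r"
proof -
  define S where "S = {(p v, v) | v. v \<in> V - {r}}"
  have "S \<subseteq> A" using parent unfolding S_def by auto
  have parents_S: "{u. (u, v) \<in> S} = (if v \<in> V - {r} then {p v} else {})" for v
    unfolding S_def by auto
  have "(r, v) \<in> S\<^sup>*" if "v \<in> V" for v
    using wf_A that
  proof (induction v rule: wf_induct_rule)
    case (less v)
    show ?case
    proof (cases "v = r")
      case False
      then have "(p v, v) \<in> A" "(p v, v) \<in> S" using parent less.prems unfolding S_def by auto
      then show ?thesis using less.IH arc_in_V by (meson rtrancl.rtrancl_into_rtrancl)
    qed simp
  qed
  moreover have "v \<in> X" if v: "v \<in> V" "outdeg S v = 0" for v
  proof (rule ccontr)
    assume "v \<notin> X"
    then obtain w where "w \<in> V - {r}" "p w = v" using onto v(1) by blast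
    then have "(v, w) \<in> S" unfolding S_def by blast
    moreover have "finite {w. (v, w) \<in> S}"
      using \<open>S \<subseteq> A\<close> by (auto intro: finite_subset[OF _ finite_children[of v]])
    ultimately show False using v(2) unfolding outdeg_def by auto
  qed
  ultimately show ?thesis
    unfolding tree_based_def indeg_def using \<open>S \<subseteq> A\<close> parents_S by (intro exI[of _ S]) auto
qed

definition omnians :: "'a set" where
  "omnians = {u\<in>V. u \<notin> X \<and> (\<forall>c. (u, c) \<in> A \<longrightarrow> ret c)}"

lemma tree_based_if_omnian_matching:
  assumes inj: "inj_on m omnians" and arcs: "\<forall>u\<in>omnians. (u, m u) \<in> A"
  shows "tree_based V A X r"
proof (rule tree_based_if_parent_choice)
  define p where "p v = (if v \<in> m ` omnians then inv_into omnians m v else (SOME u. (u, v) \<in> A))" for v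
  show "\<forall>v\<in>V - {r}. (p v, v) \<in> A"
  proof
    fix v assume v: "v \<in> V - {r}"
    show "(p v, v) \<in> A"
    proof (cases "v \<in> m ` omnians")
      case True
      have "(inv_into omnians m v, m (inv_into omnians m v)) \<in> A"
        using arcs inv_into_into[OF True] by blast
      then show ?thesis using True f_inv_into_f[OF True] unfolding p_def by simp
    next
      case False
      then show ?thesis using has_parent v unfolding p_def by (auto intro: someI_ex)
    qed
  qed
  show "\<forall>u\<in>V - X. \<exists>v\<in>V - {r}. p v = u"
  proof
    fix u assume u: "u \<in> V - X"
    show "\<exists>v\<in>V - {r}. p v = u"
    proof (cases "u \<in> omnians")
      case True
      then have "m u \<in> V - {r}" "p (m u) = u"
        using arcs arc_in_V no_arc_into_root inv_into_f_f[OF inj] unfolding p_def by auto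
      then show ?thesis by blast
    next
      case False
      then obtain c where c: "(u, c) \<in> A" "\<not> ret c" using u unfolding omnians_def by auto
      then have "c \<in> V - {r}" using arc_in_V no_arc_into_root by auto
      moreover have "(p c, c) \<in> A" using \<open>\<forall>v\<in>V - {r}. (p v, v) \<in> A\<close> calculation by blast
      ultimately show ?thesis using nonret_parent_unique c by blast
    qed
  qed
qed

definition ret_arcs :: "('a \<times> 'a) set" where
  "ret_arcs = {(a, b) \<in> A. ret a \<and> ret b}"

lemma single_valued_ret_arcs: "single_valued ret_arcs"
  unfolding ret_arcs_def single_valued_def using ret_child_unique by auto

lemma leaf_path_closed_under_ret_arcs:
  assumes p: "successively (\<lambda>u v. (u, v) \<in> A) p" "last p \<in> X"
    and "a \<in> set p" and "(a, b) \<in> ret_arcs\<^sup>*"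
  shows "b \<in> set p"
  using assms(4,3)
proof (induction rule: rtrancl_induct)
  case (step b b')
  then have "ret b" "(b, b') \<in> A" unfolding ret_arcs_def by auto
  moreover from this have "b \<noteq> last p" using ret_not_leaf p(2) by auto
  ultimately show ?case
    using successively_next_in_set[OF p(1) step.IH[OF step.prems]] ret_child_unique by blast
qed

lemma leaf_linkage_common_ret_ancestor:
  assumes P: "leaf_linkage A X S P" and u: "u1 \<in> S" "u2 \<in> S"
    and c: "c1 \<in> set (P u1)" "c2 \<in> set (P u2)"
    and h: "(h, c1) \<in> ret_arcs\<^sup>*" "(h, c2) \<in> ret_arcs\<^sup>*"
  shows "u1 = u2"
proof -
  have paths: "successively (\<lambda>u v. (u, v) \<in> A) (P u)" "last (P u) \<in> X" if "u \<in> S" for u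
    using P that unfolding leaf_linkage_def dpath_def by auto
  from h have "(c1, c2) \<in> ret_arcs\<^sup>* \<or> (c2, c1) \<in> ret_arcs\<^sup>*"
    by (rule single_valued_confluent[OF single_valued_ret_arcs])
  then have "c2 \<in> set (P u1) \<or> c1 \<in> set (P u2)"
    using leaf_path_closed_under_ret_arcs[OF paths[OF u(1)] c(1)]
      leaf_path_closed_under_ret_arcs[OF paths[OF u(2)] c(2)] by blast
  then show ?thesis using leaf_linkage_disjoint[OF P] u c by blast
qed

lemma antichain_to_leaf_ret_coparents_eq:
  assumes atl: "antichain_to_leaf V A X"
    and ret: "ret u1" "ret u2" and arcs: "(u1, c) \<in> A" "(u2, c) \<in> A"
  shows "u1 = u2"
proof (rule ccontr)
  assume ne: "u1 \<noteq> u2"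
  have no_path: "(a, b) \<notin> A\<^sup>+" if "ret a" "(a, c) \<in> A" "(b, c) \<in> A" for a b
  proof
    assume "(a, b) \<in> A\<^sup>+"
    then obtain x where "(a, x) \<in> A" "(x, b) \<in> A\<^sup>*" by (meson tranclD)
    then have "(c, c) \<in> A\<^sup>+" using ret_child_unique[OF that(1,2)] that(3) by auto
    then show False using acyclic_A unfolding acyclic_def by blast
  qed
  have "antichain V A {u1, u2}"
    unfolding antichain_def using no_path ret arcs ret_in_V by auto
  then obtain P where P: "leaf_linkage A X {u1, u2} P"
    using atl unfolding antichain_to_leaf_iff by blast
  have "c \<in> set (P u)" if "u \<in> {u1, u2}" for u
  proof -
    have "dpath A (P u)" "hd (P u) = u" "last (P u) \<in> X"
      using P that unfolding leaf_linkage_def by auto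
    moreover have "ret u" "(u, c) \<in> A" using that ret arcs by auto
    ultimately show ?thesis
      using ret_not_leaf ret_child_unique by (metis dpath_second_vertex list.set_intros(1,2))
  qed
  then show False using leaf_linkage_disjoint[OF P] ne by blast
qed

definition tree_omnians :: "'a set" where
  "tree_omnians = {u \<in> omnians. \<not> ret u}"

definition free_children :: "'a \<Rightarrow> 'a set" where
  "free_children u = {h. (u, h) \<in> A \<and> (\<forall>y. (y, h) \<in> A \<longrightarrow> \<not> ret y)}"

lemma omnian_matching_if_tree_omnian_matching:
  assumes atl: "antichain_to_leaf V A X"
    and inj: "inj_on m tree_omnians" and free: "\<forall>u\<in>tree_omnians. m u \<in> free_children u"
  shows "\<exists>m'. inj_on m' omnians \<and> (\<forall>u\<in>omnians. (u, m' u) \<in> A)"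
proof -
  define m' where "m' u = (if ret u then (SOME c. (u, c) \<in> A) else m u)" for u
  have ret_arc: "(u, m' u) \<in> A" if "ret u" for u
    using that nonleaf_has_child[OF ret_in_V ret_not_leaf] unfolding m'_def by (auto intro: someI_ex)
  have tree_arc: "m' u \<in> free_children u" if "u \<in> omnians" "\<not> ret u" for u
    using that free unfolding m'_def tree_omnians_def by auto
  have mixed: False if "ret a" "\<not> ret b" "b \<in> omnians" "m' a = m' b" for a b
  proof -
    have "(a, m' b) \<in> A" using ret_arc[OF that(1)] that(4) by simp
    moreover have "m' b \<in> free_children b" using tree_arc that(2,3) by blast
    ultimately show False using that(1) unfolding free_children_def by blast
  qed
  have "inj_on m' omnians"
  proof (rule inj_onI)
    fix u1 u2 assume u: "u1 \<in> omnians" "u2 \<in> omnians" "m' u1 = m' u2"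
    consider "ret u1" "ret u2" | "\<not> ret u1" "\<not> ret u2" | "ret u1 \<longleftrightarrow> \<not> ret u2" by blast
    then show "u1 = u2"
    proof cases
      case 1
      then show ?thesis
        using antichain_to_leaf_ret_coparents_eq[OF atl] ret_arc u(3) by metis
    next
      case 2
      then have "m u1 = m u2" "u1 \<in> tree_omnians" "u2 \<in> tree_omnians"
        using u unfolding m'_def tree_omnians_def by auto
      then show ?thesis using inj inj_onD by metis
    next
      case 3
      then show ?thesis using mixed[of u1 u2] mixed[of u2 u1] u by auto
    qed
  qed
  moreover have "\<forall>u\<in>omnians. (u, m' u) \<in> A"
    using ret_arc tree_arc unfolding free_children_def by blast
  ultimately show ?thesis by blast
qed

end

locale timed_phylo_network = proper_phylo_network +
  fixes t :: "'a \<Rightarrow> real"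
  assumes time_consistent:
    "\<forall>(u, v)\<in>A. (reticulation A v \<longrightarrow> t u = t v) \<and> (\<not> reticulation A v \<longrightarrow> t u < t v)"
begin

lemma time_ret_arc: "(u, v) \<in> A \<Longrightarrow> ret v \<Longrightarrow> t u = t v"
  using time_consistent by auto

lemma time_tree_arc: "(u, v) \<in> A \<Longrightarrow> \<not> ret v \<Longrightarrow> t u < t v"
  using time_consistent by auto

lemma time_arc: "(u, v) \<in> A \<Longrightarrow> t u \<le> t v"
  using time_ret_arc time_tree_arc by force

lemma time_mono: "(u, v) \<in> A\<^sup>* \<Longrightarrow> t u \<le> t v"
  by (induction rule: rtrancl_induct) (auto dest: time_arc)

lemma time_strict_mono: "(u, v) \<in> A\<^sup>+ \<Longrightarrow> \<not> ret v \<Longrightarrow> t u < t v"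
  by (metis order_le_less_trans time_tree_arc time_mono tranclD2)

lemma equal_time_path_ret_arcs:
  assumes "(x, y) \<in> A\<^sup>*" "ret x" "t y \<le> t x"
  shows "(x, y) \<in> ret_arcs\<^sup>* \<and> ret y"
  using assms(1,3)
proof (induction rule: rtrancl_induct)
  case base
  then show ?case using assms(2) by simp
next
  case (step z y)
  have "t x \<le> t z" "t z \<le> t y" using step.hyps time_mono time_arc by blast+
  then have "t z = t y" "t z \<le> t x" using step.prems by linarith+
  then have "(x, z) \<in> ret_arcs\<^sup>* \<and> ret z" "ret y"
    using step.IH step.hyps(2) time_tree_arc by force+
  then show ?case
    using step.hyps(2) unfolding ret_arcs_def by (auto intro: rtrancl_into_rtrancl)
qed

definition level :: "'a set \<Rightarrow> real \<Rightarrow> 'a set" where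
  "level W \<tau> = {u \<in> W. t u = \<tau>}"

definition level_children :: "'a set \<Rightarrow> real \<Rightarrow> 'a set" where
  "level_children W \<tau> = {c. \<exists>w\<in>level W \<tau>. (w, c) \<in> A}"

definition foreign_ret_parents :: "'a set \<Rightarrow> real \<Rightarrow> 'a set" where
  "foreign_ret_parents W \<tau> =
     {y. ret y \<and> (\<exists>c\<in>level_children W \<tau>. (y, c) \<in> A) \<and> (\<forall>w\<in>level W \<tau>. (w, y) \<notin> A\<^sup>+)}"

lemma level_children_ret:
  assumes "W \<subseteq> tree_omnians" "c \<in> level_children W \<tau>"
  shows "ret c \<and> t c = \<tau>"
proof -
  obtain w where "w \<in> level W \<tau>" "(w, c) \<in> A" using assms(2) unfolding level_children_def by blast
  moreover from this have "ret c" using assms(1) unfolding level_def tree_omnians_def omnians_def by auto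
  ultimately show ?thesis using time_ret_arc unfolding level_def by auto
qed

lemma foreign_ret_parents_time:
  assumes "W \<subseteq> tree_omnians" "y \<in> foreign_ret_parents W \<tau>"
  shows "t y = \<tau>"
  using assms level_children_ret time_ret_arc unfolding foreign_ret_parents_def by force

lemma antichain_level:
  assumes W: "W \<subseteq> tree_omnians"
  shows "antichain V A (level W \<tau> \<union> foreign_ret_parents W \<tau>)"
  unfolding antichain_def
proof (intro conjI ballI impI)
  show "level W \<tau> \<union> foreign_ret_parents W \<tau> \<subseteq> V"
    using W ret_in_V unfolding level_def tree_omnians_def omnians_def foreign_ret_parents_def by auto
next
  fix u v assume u: "u \<in> level W \<tau> \<union> foreign_ret_parents W \<tau>"
    and v: "v \<in> level W \<tau> \<union> foreign_ret_parents W \<tau>" and "u \<noteq> v"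
  show "(u, v) \<notin> A\<^sup>+"
  proof
    assume path: "(u, v) \<in> A\<^sup>+"
    show False
    proof (cases "v \<in> level W \<tau>")
      case True
      then have "\<not> ret v" "t v = \<tau>" using W unfolding level_def tree_omnians_def by auto
      moreover have "t u = \<tau>" using u W foreign_ret_parents_time unfolding level_def by auto
      ultimately show False using time_strict_mono[OF path] by simp
    next
      case False
      then have v_foreign: "v \<in> foreign_ret_parents W \<tau>" using v by blast
      have "\<exists>w\<in>level W \<tau>. (w, v) \<in> A\<^sup>+"
      proof (cases "u \<in> level W \<tau>")
        case False
        then have "u \<in> foreign_ret_parents W \<tau>" using u by blast
        then obtain c w where "ret u" "(u, c) \<in> A" "w \<in> level W \<tau>" "(w, c) \<in> A"
          unfolding foreign_ret_parents_def level_children_def by blast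
        moreover obtain x where "(u, x) \<in> A" "(x, v) \<in> A\<^sup>*" using path by (meson tranclD)
        ultimately have "(w, v) \<in> A\<^sup>+" using ret_child_unique by (metis rtrancl_into_trancl2)
        then show ?thesis using \<open>w \<in> level W \<tau>\<close> by blast
      qed (use path in blast)
      then show False using v_foreign unfolding foreign_ret_parents_def by blast
    qed
  qed
qed

lemma minimal_level_child_free:
  assumes W: "W \<subseteq> tree_omnians"
    and P: "leaf_linkage A X (level W \<tau> \<union> foreign_ret_parents W \<tau>) P"
    and u: "u \<in> level W \<tau>" and c: "c \<in> set (P u)"
    and h: "h \<in> level_children W \<tau>" "(h, c) \<in> ret_arcs\<^sup>*"
    and minimal: "\<forall>h'\<in>level_children W \<tau>. (h', h) \<in> ret_arcs\<^sup>+ \<longrightarrow> (h', c) \<notin> ret_arcs\<^sup>*"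
    and y: "(y, h) \<in> A"
  shows "\<not> ret y"
proof
  assume ret_y: "ret y"
  have "ret h" "t h = \<tau>" using level_children_ret[OF W h(1)] by auto
  then have y_h: "(y, h) \<in> ret_arcs" "t y = \<tau>"
    using ret_y y time_ret_arc unfolding ret_arcs_def by auto
  \<comment> \<open>Below the level, y is reached from a level child along reticulation arcs, contradicting
    minimality; otherwise y is a foreign parent whose leaf path is forced through h, and then to c.\<close>
  show False
  proof (cases "\<exists>w\<in>level W \<tau>. (w, y) \<in> A\<^sup>+")
    case True
    then obtain w x where w: "w \<in> level W \<tau>" "(w, x) \<in> A" "(x, y) \<in> A\<^sup>*"
      by (meson tranclD)
    then have x: "x \<in> level_children W \<tau>" unfolding level_children_def by blast
    then have "ret x" "t x = \<tau>" using level_children_ret[OF W] by auto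
    then have "(x, y) \<in> ret_arcs\<^sup>*" using equal_time_path_ret_arcs w(3) y_h(2) by simp
    then have "(x, h) \<in> ret_arcs\<^sup>+" using y_h(1) by simp
    moreover from this have "(x, c) \<in> ret_arcs\<^sup>*" using h(2) by simp
    ultimately show False using minimal x by blast
  next
    case False
    then have y_foreign: "y \<in> foreign_ret_parents W \<tau>"
      using ret_y y h(1) unfolding foreign_ret_parents_def by blast
    then have "dpath A (P y)" "hd (P y) = y" "last (P y) \<in> X"
      using P unfolding leaf_linkage_def by auto
    then obtain c' q where "P y = y # c' # q" "(y, c') \<in> A"
      using ret_not_leaf[OF ret_y] by (rule dpath_second_vertex)
    then have "h \<in> set (P y)" using ret_child_unique[OF ret_y _ y] by auto
    then have "y = u"
      using leaf_linkage_common_ret_ancestor[OF P _ _ _ c _ h(2)] y_foreign u by blast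
    moreover have "y \<noteq> u" using ret_y u W unfolding level_def tree_omnians_def by auto
    ultimately show False by blast
  qed
qed

lemma level_injection:
  assumes atl: "antichain_to_leaf V A X" and W: "W \<subseteq> tree_omnians"
  shows "\<exists>g. inj_on g (level W \<tau>) \<and> (\<forall>u\<in>level W \<tau>. g u \<in> \<Union>(free_children ` W) \<and> t (g u) = \<tau>)"
proof -
  obtain P where P: "leaf_linkage A X (level W \<tau> \<union> foreign_ret_parents W \<tau>) P"
    using atl antichain_level[OF W] unfolding antichain_to_leaf_iff by blast
  have path: "dpath A (P u)" "hd (P u) = u" "last (P u) \<in> X" if "u \<in> level W \<tau>" for u
    using P that unfolding leaf_linkage_def by auto
  define c where "c u = P u ! 1" for u
  have c: "c u \<in> set (P u)" "c u \<in> level_children W \<tau>" if u: "u \<in> level W \<tau>" for u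
  proof -
    have "u \<notin> X" using u W unfolding level_def tree_omnians_def omnians_def by auto
    with path[OF u] obtain c' q where "P u = u # c' # q" "(u, c') \<in> A"
      by (rule dpath_second_vertex)
    moreover from this have "c u = c'" unfolding c_def by simp
    ultimately show "c u \<in> set (P u)" "c u \<in> level_children W \<tau>"
      using u unfolding level_children_def by auto
  qed
  define B where "B u = {h \<in> level_children W \<tau>. (h, c u) \<in> ret_arcs\<^sup>*}" for u
  have wf: "wf (ret_arcs\<^sup>+)"
    by (rule wf_trancl, rule wf_subset[OF wf_A]) (auto simp: ret_arcs_def)
  define g where "g u = (SOME h. h \<in> B u \<and> (\<forall>h'. (h', h) \<in> ret_arcs\<^sup>+ \<longrightarrow> h' \<notin> B u))" for u
  have g: "g u \<in> B u" "\<forall>h'. (h', g u) \<in> ret_arcs\<^sup>+ \<longrightarrow> h' \<notin> B u" if "u \<in> level W \<tau>" for u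
  proof -
    have "c u \<in> B u" using c[OF that] unfolding B_def by simp
    then have "\<exists>h\<in>B u. \<forall>h'. (h', h) \<in> ret_arcs\<^sup>+ \<longrightarrow> h' \<notin> B u"
      using wf unfolding wf_eq_minimal by blast
    then have "g u \<in> B u \<and> (\<forall>h'. (h', g u) \<in> ret_arcs\<^sup>+ \<longrightarrow> h' \<notin> B u)"
      unfolding g_def Bex_def by (rule someI_ex)
    then show "g u \<in> B u" "\<forall>h'. (h', g u) \<in> ret_arcs\<^sup>+ \<longrightarrow> h' \<notin> B u" by auto
  qed
  have "\<not> ret y" if "u \<in> level W \<tau>" "(y, g u) \<in> A" for u y
    using minimal_level_child_free[OF W P that(1) c(1)[OF that(1)]] g[OF that(1)] that(2)
    unfolding B_def by blast
  then have g_free: "g u \<in> \<Union>(free_children ` W) \<and> t (g u) = \<tau>" if "u \<in> level W \<tau>" for u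
    using g(1)[OF that] level_children_ret[OF W] that
    unfolding B_def level_children_def level_def free_children_def by blast
  have "inj_on g (level W \<tau>)"
  proof (rule inj_onI)
    fix u1 u2 assume u: "u1 \<in> level W \<tau>" "u2 \<in> level W \<tau>" "g u1 = g u2"
    then have "(g u1, c u1) \<in> ret_arcs\<^sup>*" "(g u1, c u2) \<in> ret_arcs\<^sup>*"
      using g(1)[OF u(1)] g(1)[OF u(2)] unfolding B_def by auto
    with P show "u1 = u2" using u(1,2) c(1)[OF u(1)] c(1)[OF u(2)]
      by (blast intro: leaf_linkage_common_ret_ancestor)
  qed
  then show ?thesis using g_free by blast
qed

lemma hall_condition_tree_omnians:
  assumes atl: "antichain_to_leaf V A X" and W: "W \<subseteq> tree_omnians"
  shows "card W \<le> card (\<Union>(free_children ` W))"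
proof -
  obtain G where G: "\<And>\<tau>. inj_on (G \<tau>) (level W \<tau>)"
    "\<And>\<tau> u. u \<in> level W \<tau> \<Longrightarrow> G \<tau> u \<in> \<Union>(free_children ` W) \<and> t (G \<tau> u) = \<tau>"
    using level_injection[OF atl W] by metis
  define g where "g u = G (t u) u" for u
  have "inj_on g W"
  proof (rule inj_onI)
    fix a b assume ab: "a \<in> W" "b \<in> W" "g a = g b"
    then have "t a = t b" using G(2) unfolding g_def level_def by (metis (mono_tags) mem_Collect_eq)
    then have "G (t a) a = G (t a) b" "a \<in> level W (t a)" "b \<in> level W (t a)"
      using ab unfolding g_def level_def by auto
    then show "a = b" by (rule inj_onD[OF G(1)])
  qed
  moreover have "g ` W \<subseteq> \<Union>(free_children ` W)" using G(2) unfolding g_def level_def by auto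
  moreover have "\<Union>(free_children ` W) \<subseteq> V" using arc_in_V unfolding free_children_def by blast
  then have "finite (\<Union>(free_children ` W))" using finite_V by (rule finite_subset)
  ultimately show ?thesis by (rule card_inj_on_le)
qed

lemma antichain_to_leaf_imp_tree_based:
  assumes atl: "antichain_to_leaf V A X"
  shows "tree_based V A X r"
proof -
  have "finite tree_omnians" using finite_V unfolding tree_omnians_def omnians_def by auto
  moreover have "\<forall>u\<in>tree_omnians. finite (free_children u)"
    by (intro ballI finite_subset[OF _ finite_children]) (auto simp: free_children_def)
  moreover have "\<forall>J\<subseteq>tree_omnians. card J \<le> card (\<Union>(free_children ` J))"
    using hall_condition_tree_omnians[OF atl] by simp
  ultimately have "\<exists>m. inj_on m tree_omnians \<and> (\<forall>u\<in>tree_omnians. m u \<in> free_children u)"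
    by (rule hall_marriage)
  then obtain m where "inj_on m tree_omnians" "\<forall>u\<in>tree_omnians. m u \<in> free_children u"
    by blast
  then have "\<exists>m'. inj_on m' omnians \<and> (\<forall>u\<in>omnians. (u, m' u) \<in> A)"
    by (rule omnian_matching_if_tree_omnian_matching[OF atl])
  then obtain m' where "inj_on m' omnians" "\<forall>u\<in>omnians. (u, m' u) \<in> A"
    by blast
  then show ?thesis by (rule tree_based_if_omnian_matching)
qed

end

theorem theorem4:
  assumes "phylo_network V A X r"
    and "temporal V A"
  shows "tree_based V A X r \<longleftrightarrow> antichain_to_leaf V A X"
proof
  assume tb: "tree_based V A X r"
  have "finite V" "A \<subseteq> V \<times> V" "acyclic A"
    using assms(1) unfolding phylo_network_def by (blast, blast, blast)
  then show "antichain_to_leaf V A X" using tb by (rule tree_based_imp_antichain_to_leaf)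
next
  assume atl: "antichain_to_leaf V A X"
  show "tree_based V A X r"
  proof (cases "A = {}")
    case True
    then have "\<not> outdeg A r \<ge> 1" by (simp add: outdeg_def)
    then have "V = {r}" "X = {r}" using assms(1) unfolding phylo_network_def by auto
    then show ?thesis
      unfolding tree_based_def using True by (intro exI[of _ "{}"]) (simp add: indeg_def outdeg_def)
  next
    case False
    obtain t :: "'a \<Rightarrow> real" where
      "\<forall>(u, v)\<in>A. (reticulation A v \<longrightarrow> t u = t v) \<and> (\<not> reticulation A v \<longrightarrow> t u < t v)"
      using assms(2) unfolding temporal_def by blast
    then interpret timed_phylo_network V A X r t
      using assms(1) False by unfold_locales
    show ?thesis using atl by (rule antichain_to_leaf_imp_tree_based)
  qed
qed

end
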